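(* Let $\mathfrak p=(p,q)$ with $p$ odd and $q$ divisible by four, and $\Gamma=\Gamma_{\mathfrak p}$. Then $0\in\operatorname{int}B_j^\Gamma$ for some $1\le j\le pq$.
   Context: For $r\ge3$ and $\theta\in\mathbb R$, $\Delta_\theta^r\in\mathbb C^{r\times r}$ is the Hermitian matrix with $1$ on the sub- and superdiagonals, $0$ on the diagonal, entry $e^{-i\theta}$ in position $(1,r)$ and $e^{i\theta}$ in position $(r,1)$, all other entries $0$; $\Delta_\theta^1=2\cos\theta$, $\Delta_\theta^2=\begin{bmatrix}0&1+e^{-i\theta}\\1+e^{i\theta}&0\end{bmatrix}$. $\Gamma_{\mathfrak p}=([0,p)\times[0,q))\cap\mathbb Z^2$, $\Delta^{\Gamma}_{\theta,\varphi}=\Delta_\theta^p\otimes I_q+I_p\otimes\Delta_\varphi^q$, with eigenvalues $\lambda_1^\Gamma(\theta,\varphi)\le\cdots\le\lambda_{pq}^\Gamma(\theta,\varphi)$ counted with multiplicity, and bands $B_j^\Gamma=\{\lambda_j^\Gamma(\theta,\varphi):(\theta,\varphi)\in[0,\pi]^2\}$. *)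

theory Defs
  imports "HOL-Analysis.Analysis" "Jordan_Normal_Form.Char_Poly"
begin

definition Delta :: "nat \<Rightarrow> real \<Rightarrow> complex mat" where
  "Delta r \<theta> =
    (if r = 1 then mat 1 1 (\<lambda>_. complex_of_real (2 * cos \<theta>))
     else if r = 2 then mat 2 2 (\<lambda>(i,j).
        if i = 0 \<and> j = 1 then 1 + exp (- \<i> * complex_of_real \<theta>)
        else if i = 1 \<and> j = 0 then 1 + exp (\<i> * complex_of_real \<theta>)
        else 0)
     else mat r r (\<lambda>(i,j).
        if i + 1 = j \<or> j + 1 = i then 1
        else if i = 0 \<and> j = r - 1 then exp (- \<i> * complex_of_real \<theta>)
        else if i = r - 1 \<and> j = 0 then exp (\<i> * complex_of_real \<theta>)
        else 0))"

definition kron :: "complex mat \<Rightarrow> complex mat \<Rightarrow> complex mat" where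
  "kron A B = mat (dim_row A * dim_row B) (dim_col A * dim_col B)
     (\<lambda>(i,j). A $$ (i div dim_row B, j div dim_col B) * B $$ (i mod dim_row B, j mod dim_col B))"

definition DeltaGamma :: "nat \<Rightarrow> nat \<Rightarrow> real \<Rightarrow> real \<Rightarrow> complex mat" where
  "DeltaGamma p q \<theta> \<phi> = kron (Delta p \<theta>) (1\<^sub>m q) + kron (1\<^sub>m p) (Delta q \<phi>)"

text \<open>Eigenvalues (of a Hermitian matrix) counted with multiplicity, sorted increasingly.\<close>
definition eigs :: "complex mat \<Rightarrow> real list" where
  "eigs A = sorted_list_of_multiset (image_mset Re (proots (char_poly A)))"

definition lam :: "nat \<Rightarrow> nat \<Rightarrow> nat \<Rightarrow> real \<Rightarrow> real \<Rightarrow> real" where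
  "lam p q j \<theta> \<phi> = eigs (DeltaGamma p q \<theta> \<phi>) ! (j - 1)"

definition band :: "nat \<Rightarrow> nat \<Rightarrow> nat \<Rightarrow> real set" where
  "band p q j = (\<lambda>(\<theta>, \<phi>). lam p q j \<theta> \<phi>) ` ({0..pi} \<times> {0..pi})"

end

theory Submission
  imports Defs "HOL-Library.Z2"
begin

text \<open>
  For every \<open>r \<ge> 1\<close> the matrix \<open>\<Delta>\<^sup>r\<^sub>\<theta>\<close> is diagonalised by the discrete Fourier basis, with eigenvalues
  \<open>2 cos ((\<theta> + 2\<pi>k)/r)\<close>; so the eigenvalues of \<open>\<Delta>\<^sup>\<Gamma>\<^sub>\<theta>\<^sub>,\<^sub>\<phi>\<close> are
  \<open>F\<^sub>k\<^sub>,\<^sub>l = 2 cos ((\<theta> + 2\<pi>k)/p) + 2 cos ((\<phi> + 2\<pi>l)/q)\<close>. The sorted eigenvalues depend continuously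
  on \<open>(\<theta>, \<phi>)\<close>, so every band is an interval, and \<open>0\<close> is interior to \<open>B\<^sub>j\<close> once \<open>\<lambda>\<^sub>j\<close> takes both signs.
  A sum-to-product formula factors \<open>F\<^sub>k\<^sub>,\<^sub>l(\<pi> - pt \<plusminus> 2pu, qt)\<close> as \<open>4 cos (\<sigma> \<plusminus> u) cos (\<delta> - t \<plusminus> u)\<close>;
  for generic small \<open>t\<close> and \<open>u\<close>, exactly the indices with \<open>cos \<sigma> = 0\<close> change sign between the two
  points. For odd \<open>p\<close> these indices are the points of an involution with a single fixed point, hence
  odd in number, so the counts of negative eigenvalues at the two points differ; the larger count
  is the required \<open>j\<close>.
\<close>

section \<open>Order statistics of multisets\<close>

definition order_stat :: "'a::linorder multiset \<Rightarrow> nat \<Rightarrow> 'a" where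
  "order_stat M j = sorted_list_of_multiset M ! j"

lemma sorted_nth_iff_less_length_filter:
  fixes xs :: "'a::linorder list"
  assumes sorted: "sorted xs" and j: "j < length xs"
    and downward: "\<And>x y. P y \<Longrightarrow> x \<le> y \<Longrightarrow> P x"
  shows "P (xs ! j) \<longleftrightarrow> j < length (filter P xs)"
proof -
  let ?S = "{i. i < length xs \<and> P (xs ! i)}"
  have len: "length (filter P xs) = card ?S"
    by (rule length_filter_conv_card)
  show ?thesis
  proof
    assume "P (xs ! j)"
    then have "{..j} \<subseteq> ?S"
      using sorted j by (auto intro: downward sorted_nth_mono)
    then have "card {..j} \<le> card ?S"
      by (intro card_mono) auto
    then show "j < length (filter P xs)"
      using len by simp
  next
    assume less: "j < length (filter P xs)"
    show "P (xs ! j)"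
    proof (rule ccontr)
      assume not_P: "\<not> P (xs ! j)"
      have "i < j" if "i < length xs" "P (xs ! i)" for i
      proof (rule ccontr)
        assume "\<not> i < j"
        then have "xs ! j \<le> xs ! i"
          using sorted that(1) by (simp add: sorted_nth_mono)
        then show False
          using downward that(2) not_P by blast
      qed
      then have "?S \<subseteq> {..<j}"
        by auto
      then have "card ?S \<le> j"
        using card_mono[of "{..<j}" ?S] by simp
      then show False
        using less len by simp
    qed
  qed
qed

lemma size_filter_mset_eq_length_filter:
  "size (filter_mset P M) = length (filter P (sorted_list_of_multiset M))"
  by (metis mset_filter mset_sorted_list_of_multiset size_mset)

lemma length_sorted_list_of_multiset: "length (sorted_list_of_multiset M) = size M"
  by (metis mset_sorted_list_of_multiset size_mset)

lemma order_stat_le_iff: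
  assumes "j < size M"
  shows "order_stat M j \<le> t \<longleftrightarrow> j < size (filter_mset (\<lambda>x. x \<le> t) M)"
  unfolding order_stat_def size_filter_mset_eq_length_filter
  using assms by (intro sorted_nth_iff_less_length_filter) (auto simp: length_sorted_list_of_multiset)

lemma order_stat_less_iff:
  assumes "j < size M"
  shows "order_stat M j < t \<longleftrightarrow> j < size (filter_mset (\<lambda>x. x < t) M)"
  unfolding order_stat_def size_filter_mset_eq_length_filter
  using assms by (intro sorted_nth_iff_less_length_filter) (auto simp: length_sorted_list_of_multiset)

lemma order_stat_image_mset_le:
  fixes g g' :: "'b \<Rightarrow> 'a::linordered_ab_group_add"
  assumes j: "j < size A" and le: "\<And>a. a \<in># A \<Longrightarrow> g' a \<le> g a + e"
  shows "order_stat (image_mset g' A) j \<le> order_stat (image_mset g A) j + e"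
proof -
  define t where "t = order_stat (image_mset g A) j"
  have "j < size (filter_mset (\<lambda>a. g a \<le> t) A)"
    using order_stat_le_iff[of j "image_mset g A" t] j by (simp add: t_def filter_mset_image_mset)
  also have "\<dots> \<le> size (filter_mset (\<lambda>a. g' a \<le> t + e) A)"
    by (intro size_mset_mono filter_mset_mono_strong) (simp, meson add_right_mono le order_trans)
  finally show ?thesis
    using order_stat_le_iff[of j "image_mset g' A" "t + e"] j by (simp add: t_def filter_mset_image_mset)
qed

lemma continuous_on_order_stat:
  fixes g :: "'a \<Rightarrow> 'b::topological_space \<Rightarrow> real"
  assumes j: "j < size A" and cont: "\<And>a. a \<in># A \<Longrightarrow> continuous_on S (g a)"
  shows "continuous_on S (\<lambda>x. order_stat (image_mset (\<lambda>a. g a x) A) j)"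
  unfolding continuous_on_def
proof
  fix x assume x: "x \<in> S"
  let ?stat = "\<lambda>y. order_stat (image_mset (\<lambda>a. g a y) A) j"
  show "(?stat \<longlongrightarrow> ?stat x) (at x within S)"
  proof (rule tendstoI)
    fix e :: real assume e: "e > 0"
    have "\<forall>\<^sub>F y in at x within S. \<forall>a\<in>set_mset A. dist (g a y) (g a x) < e / 2"
      using cont x e by (intro eventually_ball_finite ballI tendstoD) (auto simp: continuous_on_def)
    then show "\<forall>\<^sub>F y in at x within S. dist (?stat y) (?stat x) < e"
    proof (rule eventually_mono)
      fix y assume close: "\<forall>a\<in>set_mset A. dist (g a y) (g a x) < e / 2"
      have "g a y \<le> g a x + e / 2 \<and> g a x \<le> g a y + e / 2" if "a \<in># A" for a
      proof -
        have "\<bar>g a y - g a x\<bar> < e / 2"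
          using close that unfolding dist_real_def by blast
        then show ?thesis by arith
      qed
      then have "?stat y \<le> ?stat x + e / 2" "?stat x \<le> ?stat y + e / 2"
        by (simp_all add: order_stat_image_mset_le[OF j])
      then show "dist (?stat y) (?stat x) < e"
        using e by (simp add: dist_real_def)
    qed
  qed
qed

section \<open>Kronecker products\<close>

lemma index_mult_mat_sum:
  assumes "A \<in> carrier_mat m n" "B \<in> carrier_mat n k" "i < m" "j < k"
  shows "(A * B) $$ (i, j) = (\<Sum>l<n. A $$ (i, l) * B $$ (l, j))"
  using assms by (simp add: scalar_prod_def atLeast0LessThan)

lemma sum_lessThan_mult_nat:
  fixes g :: "nat \<Rightarrow> 'a::comm_monoid_add"
  shows "(\<Sum>j<m * n. g j) = (\<Sum>a<m. \<Sum>b<n. g (a * n + b))"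
proof -
  have "(\<Sum>j<m * n. g j) = (\<Sum>a<m. sum g {a * n..<a * n + n})"
    by (rule sum.nat_group[symmetric])
  also have "\<dots> = (\<Sum>a<m. \<Sum>b<n. g (a * n + b))"
  proof (rule sum.cong[OF refl])
    fix a
    show "sum g {a * n..<a * n + n} = (\<Sum>b<n. g (a * n + b))"
      using sum.shift_bounds_nat_ivl[of g 0 "a * n" n] by (simp add: atLeast0LessThan add.commute)
  qed
  finally show ?thesis .
qed

lemma mult_add_less_mult_nat: "a < m \<Longrightarrow> b < n \<Longrightarrow> a * n + b < m * (n::nat)"
proof -
  assume "a < m" "b < n"
  then have "a * n + b < (a + 1) * n" by simp
  also have "\<dots> \<le> m * n" using \<open>a < m\<close> by (intro mult_right_mono) auto
  finally show ?thesis .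
qed

lemma kron_carrier_mat:
  "A \<in> carrier_mat m m' \<Longrightarrow> B \<in> carrier_mat n n' \<Longrightarrow> kron A B \<in> carrier_mat (m * n) (m' * n')"
  by (simp add: kron_def)

lemma index_kron:
  "A \<in> carrier_mat m m' \<Longrightarrow> B \<in> carrier_mat n n' \<Longrightarrow> i < m * n \<Longrightarrow> j < m' * n' \<Longrightarrow>
   kron A B $$ (i, j) = A $$ (i div n, j div n') * B $$ (i mod n, j mod n')"
  by (simp add: kron_def)

lemma kron_mult_kron:
  assumes A: "A \<in> carrier_mat m m" and B: "B \<in> carrier_mat n n"
    and X: "X \<in> carrier_mat m m" and Y: "Y \<in> carrier_mat n n"
  shows "kron A B * kron X Y = kron (A * X) (B * Y)"
proof (rule eq_matI)
  fix i c assume "i < dim_row (kron (A * X) (B * Y))" "c < dim_col (kron (A * X) (B * Y))"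
  then have i: "i < m * n" and c: "c < m * n"
    using A B X Y by (simp_all add: kron_def)
  then have n: "n > 0" by (cases n) auto
  have "(kron A B * kron X Y) $$ (i, c) = (\<Sum>l<m * n. kron A B $$ (i, l) * kron X Y $$ (l, c))"
    by (rule index_mult_mat_sum[OF kron_carrier_mat[OF A B] kron_carrier_mat[OF X Y] i c])
  also have "\<dots> = (\<Sum>a<m. \<Sum>b<n. (A $$ (i div n, a) * X $$ (a, c div n)) * (B $$ (i mod n, b) * Y $$ (b, c mod n)))"
    unfolding sum_lessThan_mult_nat
  proof (intro sum.cong refl)
    fix a b assume "a \<in> {..<m}" "b \<in> {..<n}"
    then have ab: "a * n + b < m * n" and dm: "(a * n + b) div n = a" "(a * n + b) mod n = b"
      by (auto simp: mult_add_less_mult_nat)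
    show "kron A B $$ (i, a * n + b) * kron X Y $$ (a * n + b, c) =
      (A $$ (i div n, a) * X $$ (a, c div n)) * (B $$ (i mod n, b) * Y $$ (b, c mod n))"
      using index_kron[OF A B i ab] index_kron[OF X Y ab c] dm by (simp add: ac_simps)
  qed
  also have "\<dots> = (A * X) $$ (i div n, c div n) * (B * Y) $$ (i mod n, c mod n)"
    using i c n
    by (simp add: sum_product index_mult_mat_sum[OF A X] index_mult_mat_sum[OF B Y]
        less_mult_imp_div_less del: index_mult_mat)
  also have "\<dots> = kron (A * X) (B * Y) $$ (i, c)"
    using A B X Y i c by (simp add: kron_def)
  finally show "(kron A B * kron X Y) $$ (i, c) = kron (A * X) (B * Y) $$ (i, c)" .
qed (use A B X Y in \<open>simp_all add: kron_def\<close>)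

lemma kron_one_one: "kron (1\<^sub>m m) (1\<^sub>m n) = (1\<^sub>m (m * n) :: complex mat)"
proof (rule eq_matI)
  fix i j assume "i < dim_row (1\<^sub>m (m * n) :: complex mat)" "j < dim_col (1\<^sub>m (m * n) :: complex mat)"
  then have i: "i < m * n" and j: "j < m * n" by auto
  then have "n > 0" by (cases n) auto
  have "(i div n = j div n \<and> i mod n = j mod n) \<longleftrightarrow> i = j"
    by (metis div_mult_mod_eq)
  then show "kron (1\<^sub>m m) (1\<^sub>m n) $$ (i, j) = (1\<^sub>m (m * n) :: complex mat) $$ (i, j)"
    using i j \<open>n > 0\<close> by (auto simp: kron_def less_mult_imp_div_less)
qed (auto simp: kron_def)

lemma proots_char_poly_similar_upper_triangular:
  fixes A D :: "'a::idom mat"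
  assumes "similar_mat A D" "D \<in> carrier_mat n n" "upper_triangular D"
  shows "proots (char_poly A) = mset (diag_mat D)"
proof -
  have "char_poly A = (\<Prod>a\<leftarrow>diag_mat D. [:- a, 1:])"
    using char_poly_similar[OF assms(1)] char_poly_upper_triangular[OF assms(2,3)] by simp
  also have "proots (\<Prod>a\<leftarrow>xs. [:- a, 1:]) = (\<Sum>a\<leftarrow>xs. proots [:- a, 1:])" for xs :: "'a list"
    by (subst proots_prod_list[of "map (\<lambda>a. [:- a, 1:]) xs", simplified])
       (auto simp: o_def dest!: arg_cong[where f = "\<lambda>p. coeff p 1"])
  also have "(\<Sum>a\<leftarrow>xs. proots [:- a, 1:]) = mset xs" for xs :: "'a list"
    by (induction xs) simp_all
  finally show ?thesis .
qed

section \<open>Fourier diagonalisation of \<open>\<Delta>\<close>\<close>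

definition fourier_angle :: "nat \<Rightarrow> real \<Rightarrow> nat \<Rightarrow> real" where
  "fourier_angle r \<theta> k = (\<theta> + 2 * pi * real k) / real r"

definition fourier_mat :: "nat \<Rightarrow> real \<Rightarrow> complex mat" where
  "fourier_mat r \<theta> = mat r r (\<lambda>(j, k). cis (fourier_angle r \<theta> k) ^ j)"

definition fourier_inv_mat :: "nat \<Rightarrow> real \<Rightarrow> complex mat" where
  "fourier_inv_mat r \<theta> = mat r r (\<lambda>(k, j). cnj (cis (fourier_angle r \<theta> k)) ^ j / of_nat r)"

definition Delta_eigvals_mat :: "nat \<Rightarrow> real \<Rightarrow> complex mat" where
  "Delta_eigvals_mat r \<theta> =
     mat r r (\<lambda>(i, j). if i = j then complex_of_real (2 * cos (fourier_angle r \<theta> i)) else 0)"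

lemma fourier_mats_carrier [simp]:
  "fourier_mat r \<theta> \<in> carrier_mat r r" "fourier_inv_mat r \<theta> \<in> carrier_mat r r"
  "Delta_eigvals_mat r \<theta> \<in> carrier_mat r r" "Delta r \<theta> \<in> carrier_mat r r"
  by (simp_all add: fourier_mat_def fourier_inv_mat_def Delta_eigvals_mat_def Delta_def)

lemma cis_fourier_angle_power:
  assumes "r > 0"
  shows "cis (fourier_angle r \<theta> k) ^ r = cis \<theta>"
proof -
  have "cis (fourier_angle r \<theta> k) ^ r = cis (real r * fourier_angle r \<theta> k)"
    by (rule Complex.DeMoivre)
  also have "\<dots> = cis \<theta> * cis (2 * pi * real k)"
    using assms by (simp add: fourier_angle_def cis_mult[symmetric])
  finally show ?thesis
    by (simp add: cis_multiple_2pi)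
qed

lemma sum_roots_of_unity:
  fixes k k' r :: nat
  assumes k: "k < r" and k': "k' < r"
  shows "(\<Sum>j<r. cis (2 * pi * (real k' - real k) / real r) ^ j) = (if k = k' then of_nat r else 0)"
proof (cases "k = k'")
  case False
  define z where "z = cis (2 * pi * (real k' - real k) / real r)"
  have "z ^ r = cis (real r * (2 * pi * (real k' - real k) / real r))"
    unfolding z_def by (rule Complex.DeMoivre)
  also have "\<dots> = cis (2 * pi * real_of_int (int k' - int k))"
    using k by simp
  finally have "z ^ r = cis (2 * pi * real_of_int (int k' - int k))" .
  then have "z ^ r = 1"
    by (simp add: cis_multiple_2pi)
  have "z \<noteq> 1"
  proof
    assume "z = 1"
    then have "cos (2 * pi * (real k' - real k) / real r) = 1"
      unfolding z_def by (metis cis.sel(1) one_complex.sel(1))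
    then obtain n :: int where "2 * pi * (real k' - real k) / real r = of_int n * 2 * pi"
      using cos_one_2pi_int by blast
    then have "2 * pi * (real k' - real k) = 2 * pi * (of_int n * real r)"
      using k by (simp add: divide_eq_eq algebra_simps)
    then have "real k' - real k = of_int n * real r"
      by simp
    then have diff: "int k' - int k = n * int r"
      by (metis of_int_eq_iff of_int_mult of_int_of_nat_eq of_int_diff)
    have "\<bar>n * int r\<bar> < int r"
      unfolding diff[symmetric] using k k' by auto
    then have "\<bar>n\<bar> * int r < 1 * int r"
      by (simp add: abs_mult)
    then have "n = 0"
      using k by (simp only: mult_less_cancel_right) simp
    then show False
      using diff False by simp
  qed
  then have "(\<Sum>j<r. z ^ j) = (1 - z ^ r) / (1 - z)"
    by (simp add: sum_gp_strict)
  then show ?thesis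
    using \<open>z ^ r = 1\<close> False unfolding z_def by simp
qed simp

lemma fourier_inv_mat_mult:
  assumes r: "r > 0"
  shows "fourier_inv_mat r \<theta> * fourier_mat r \<theta> = 1\<^sub>m r"
proof (rule eq_matI)
  fix k k' assume "k < dim_row (1\<^sub>m r :: complex mat)" "k' < dim_col (1\<^sub>m r :: complex mat)"
  then have k: "k < r" and k': "k' < r" by auto
  have conj_prod: "cnj (cis (fourier_angle r \<theta> k)) * cis (fourier_angle r \<theta> k') =
      cis (2 * pi * (real k' - real k) / real r)"
    using r by (simp add: cis_cnj cis_mult fourier_angle_def diff_divide_distrib[symmetric] algebra_simps)
  have "(fourier_inv_mat r \<theta> * fourier_mat r \<theta>) $$ (k, k') =
      (\<Sum>j<r. cis (2 * pi * (real k' - real k) / real r) ^ j) / of_nat r"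
    using k k' by (simp add: index_mult_mat_sum[of _ r r _ r] fourier_inv_mat_def fourier_mat_def
        sum_divide_distrib conj_prod[symmetric] power_mult_distrib del: index_mult_mat)
  then show "(fourier_inv_mat r \<theta> * fourier_mat r \<theta>) $$ (k, k') = 1\<^sub>m r $$ (k, k')"
    using sum_roots_of_unity[OF k k'] k k' r by simp
qed (simp_all add: fourier_inv_mat_def fourier_mat_def)

lemma sum_lessThan_two_points:
  fixes g :: "nat \<Rightarrow> 'a::semiring_0"
  assumes "a < r" "b < r" "a \<noteq> b"
  shows "(\<Sum>j<r. (if j = a then x else if j = b then y else 0) * g j) = x * g a + y * g b"
proof -
  have "(\<Sum>j<r. (if j = a then x else if j = b then y else 0) * g j) =
      (\<Sum>j<r. (if j = a then x * g a else 0) + (if j = b then y * g b else 0))"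
    using assms(3) by (intro sum.cong) auto
  then show ?thesis
    using assms by (simp add: sum.distrib)
qed

lemma Delta_first_row:
  assumes "3 \<le> r" "j < r"
  shows "Delta r \<theta> $$ (0, j) = (if j = 1 then 1 else if j = r - 1 then exp (- \<i> * complex_of_real \<theta>) else 0)"
  using assms by (auto simp: Delta_def)

lemma Delta_middle_row:
  assumes "3 \<le> r" "0 < i" "i + 1 < r" "j < r"
  shows "Delta r \<theta> $$ (i, j) = (if j = i + 1 then 1 else if j = i - 1 then 1 else 0)"
  using assms by (auto simp: Delta_def)

lemma Delta_last_row:
  assumes "3 \<le> r" "i + 1 = r" "j < r"
  shows "Delta r \<theta> $$ (i, j) = (if j = 0 then exp (\<i> * complex_of_real \<theta>) else if j = r - 2 then 1 else 0)"
  using assms by (auto simp: Delta_def)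

lemma Delta_row_sum_powers:
  assumes r: "r > 0" and i: "i < r" and w: "w ^ r = cis \<theta>"
  shows "(\<Sum>j<r. Delta r \<theta> $$ (i, j) * w ^ j) = w ^ i * (w + inverse w)"
proof -
  have "w \<noteq> 0"
    using w r by (metis cis_neq_zero zero_power)
  have wr: "w ^ r = w ^ (r - 1) * w"
    using power_minus_mult[OF r, of w] by simp
  have exp_pos: "exp (\<i> * complex_of_real \<theta>) = w ^ r"
    and exp_neg: "exp (- (\<i> * complex_of_real \<theta>)) = inverse (w ^ r)"
    using w by (simp_all add: cis_conv_exp mult.commute exp_minus[symmetric])
  consider "r = 1" | "r = 2" | "3 \<le> r"
    using r by linarith
  then show ?thesis
  proof cases
    case 1
    then show ?thesis
      using i w by (simp add: Delta_def complex_eq_iff)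
  next
    case 2
    then show ?thesis
      using i \<open>w \<noteq> 0\<close> unfolding Delta_def mult_minus_left exp_pos exp_neg
      by (auto simp: field_simps numeral_2_eq_2 less_Suc_eq)
  next
    case 3
    consider "i = 0" | "0 < i" "i + 1 < r" | "i = r - 1"
      using i by linarith
    then show ?thesis
    proof cases
      case 1
      have "(\<Sum>j<r. Delta r \<theta> $$ (i, j) * w ^ j) =
          (\<Sum>j<r. (if j = 1 then 1 else if j = r - 1 then inverse (w ^ r) else 0) * w ^ j)"
        using 1 3 by (intro sum.cong) (simp_all add: Delta_first_row exp_neg)
      also have "\<dots> = w + inverse (w ^ r) * w ^ (r - 1)"
        using 3 by (subst sum_lessThan_two_points) auto
      finally show ?thesis
        using 1 \<open>w \<noteq> 0\<close> by (simp add: wr field_simps)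
    next
      case 2
      have "(\<Sum>j<r. Delta r \<theta> $$ (i, j) * w ^ j) =
          (\<Sum>j<r. (if j = i + 1 then 1 else if j = i - 1 then 1 else 0) * w ^ j)"
        using 2 3 by (intro sum.cong) (simp_all add: Delta_middle_row)
      also have "\<dots> = w ^ (i + 1) + w ^ (i - 1)"
        using 2 by (subst sum_lessThan_two_points) auto
      moreover have "w ^ (i - 1) * w = w ^ i"
        using 2 by (cases i) simp_all
      ultimately show ?thesis
        using \<open>w \<noteq> 0\<close> by (simp add: field_simps)
    next
      case 3
      have "(\<Sum>j<r. Delta r \<theta> $$ (i, j) * w ^ j) =
          (\<Sum>j<r. (if j = 0 then w ^ r else if j = r - 2 then 1 else 0) * w ^ j)"
        using 3 \<open>3 \<le> r\<close> by (intro sum.cong) (simp_all add: Delta_last_row exp_pos)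
      also have "\<dots> = w ^ r + w ^ (r - 2)"
        using \<open>3 \<le> r\<close> by (subst sum_lessThan_two_points) auto
      moreover have "r - 1 = Suc (r - 2)"
        using \<open>3 \<le> r\<close> by simp
      ultimately show ?thesis
        using 3 \<open>w \<noteq> 0\<close> by (simp add: wr field_simps)
    qed
  qed
qed

lemma Delta_mult_fourier_mat:
  assumes r: "r > 0"
  shows "Delta r \<theta> * fourier_mat r \<theta> = fourier_mat r \<theta> * Delta_eigvals_mat r \<theta>"
proof (rule eq_matI)
  fix i k assume "i < dim_row (fourier_mat r \<theta> * Delta_eigvals_mat r \<theta>)"
    "k < dim_col (fourier_mat r \<theta> * Delta_eigvals_mat r \<theta>)"
  then have i: "i < r" and k: "k < r"
    by (auto simp: fourier_mat_def Delta_eigvals_mat_def)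
  let ?w = "cis (fourier_angle r \<theta> k)"
  have "(Delta r \<theta> * fourier_mat r \<theta>) $$ (i, k) = (\<Sum>j<r. Delta r \<theta> $$ (i, j) * ?w ^ j)"
    using i k by (simp add: index_mult_mat_sum[of _ r r _ r] fourier_mat_def del: index_mult_mat)
  also have "\<dots> = ?w ^ i * (?w + inverse ?w)"
    using r i by (intro Delta_row_sum_powers cis_fourier_angle_power)
  also have "\<dots> = (fourier_mat r \<theta> * Delta_eigvals_mat r \<theta>) $$ (i, k)"
    using i k by (simp add: index_mult_mat_sum[of _ r r _ r] fourier_mat_def Delta_eigvals_mat_def
        complex_eq_iff if_distrib[where f = "\<lambda>x. _ * x"] sum.delta' cong: if_cong del: index_mult_mat)
  finally show "(Delta r \<theta> * fourier_mat r \<theta>) $$ (i, k) = (fourier_mat r \<theta> * Delta_eigvals_mat r \<theta>) $$ (i, k)" .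
qed (simp_all add: fourier_mat_def Delta_eigvals_mat_def carrier_matD[OF fourier_mats_carrier(4)])

section \<open>Spectrum and bands of \<open>\<Delta>\<^sup>\<Gamma>\<close>\<close>

text \<open>The index \<open>i\<close> stands for the pair \<open>(i div q, i mod q)\<close>, as in the row numbering of \<open>kron\<close>.\<close>

definition grid_eigval :: "nat \<Rightarrow> nat \<Rightarrow> real \<Rightarrow> real \<Rightarrow> nat \<Rightarrow> real" where
  "grid_eigval p q \<theta> \<phi> i =
     2 * cos (fourier_angle p \<theta> (i div q)) + 2 * cos (fourier_angle q \<phi> (i mod q))"

lemma DeltaGamma_similar_diag:
  assumes p: "p > 0" and q: "q > 0"
  shows "similar_mat (DeltaGamma p q \<theta> \<phi>)
    (kron (Delta_eigvals_mat p \<theta>) (1\<^sub>m q) + kron (1\<^sub>m p) (Delta_eigvals_mat q \<phi>))" (is "similar_mat _ ?D")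
proof -
  let ?U = "kron (fourier_mat p \<theta>) (fourier_mat q \<phi>)"
    and ?W = "kron (fourier_inv_mat p \<theta>) (fourier_inv_mat q \<phi>)"
  have carrier: "kron A B \<in> carrier_mat (p * q) (p * q)"
    if "A \<in> carrier_mat p p" "B \<in> carrier_mat q q" for A B :: "complex mat"
    using that by (rule kron_carrier_mat)
  note kron_mult = kron_mult_kron[of _ p _ q]
  have WU: "?W * ?U = 1\<^sub>m (p * q)"
    using p q by (simp add: kron_mult fourier_inv_mat_mult kron_one_one)
  have UW: "?U * ?W = 1\<^sub>m (p * q)"
    by (rule mat_mult_left_right_inverse[OF carrier carrier WU]) simp_all
  have "kron (Delta p \<theta>) (1\<^sub>m q) * ?U = ?U * kron (Delta_eigvals_mat p \<theta>) (1\<^sub>m q)"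
    "kron (1\<^sub>m p) (Delta q \<phi>) * ?U = ?U * kron (1\<^sub>m p) (Delta_eigvals_mat q \<phi>)"
    using p q by (simp_all add: kron_mult Delta_mult_fourier_mat
        left_mult_one_mat[OF fourier_mats_carrier(1)] right_mult_one_mat[OF fourier_mats_carrier(1)])
  then have intertwine: "DeltaGamma p q \<theta> \<phi> * ?U = ?U * ?D"
    unfolding DeltaGamma_def
    by (simp add: add_mult_distrib_mat[OF carrier carrier carrier] mult_add_distrib_mat[OF carrier carrier carrier])
  have DG: "DeltaGamma p q \<theta> \<phi> \<in> carrier_mat (p * q) (p * q)" and D: "?D \<in> carrier_mat (p * q) (p * q)"
    unfolding DeltaGamma_def by (intro add_carrier_mat carrier; simp)+
  have U: "?U \<in> carrier_mat (p * q) (p * q)" and W: "?W \<in> carrier_mat (p * q) (p * q)"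
    by (intro carrier; simp)+
  have "DeltaGamma p q \<theta> \<phi> = DeltaGamma p q \<theta> \<phi> * (?U * ?W)"
    using UW DG by simp
  also have "\<dots> = ?U * ?D * ?W"
    using DG U W by (simp flip: intertwine)
  finally have "DeltaGamma p q \<theta> \<phi> = ?U * ?D * ?W" .
  from similar_matI[OF _ UW WU this] show ?thesis
    using DG D U W by auto
qed

lemma eigs_DeltaGamma:
  assumes p: "p > 0" and q: "q > 0"
  shows "eigs (DeltaGamma p q \<theta> \<phi>) =
    sorted_list_of_multiset (image_mset (grid_eigval p q \<theta> \<phi>) (mset_set {..<p * q}))"
proof -
  let ?D = "kron (Delta_eigvals_mat p \<theta>) (1\<^sub>m q) + kron (1\<^sub>m p) (Delta_eigvals_mat q \<phi>)"
  have D: "?D \<in> carrier_mat (p * q) (p * q)"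
    by (intro add_carrier_mat kron_carrier_mat) simp_all
  have D_entry: "?D $$ (i, k) = (if i = k then complex_of_real (grid_eigval p q \<theta> \<phi> i) else 0)"
    if "i < p * q" "k < p * q" for i k
  proof -
    have "(i div q = k div q \<and> i mod q = k mod q) \<longleftrightarrow> i = k"
      by (metis div_mult_mod_eq)
    then show ?thesis
      using that q by (auto simp: kron_def Delta_eigvals_mat_def grid_eigval_def less_mult_imp_div_less)
  qed
  have "upper_triangular ?D"
    using D D_entry unfolding upper_triangular_def by auto
  moreover have "diag_mat ?D = map (\<lambda>i. complex_of_real (grid_eigval p q \<theta> \<phi> i)) [0..<p * q]"
    using D D_entry unfolding diag_mat_def by auto
  ultimately have "proots (char_poly (DeltaGamma p q \<theta> \<phi>)) =
      mset (map (\<lambda>i. complex_of_real (grid_eigval p q \<theta> \<phi> i)) [0..<p * q])"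
    using proots_char_poly_similar_upper_triangular[OF DeltaGamma_similar_diag[OF p q] D] by simp
  then show ?thesis
    unfolding eigs_def by (simp add: image_mset.compositionality o_def atLeast0LessThan)
qed

lemma lam_eq_order_stat:
  assumes "p > 0" "q > 0"
  shows "lam p q j \<theta> \<phi> = order_stat (image_mset (grid_eigval p q \<theta> \<phi>) (mset_set {..<p * q})) (j - 1)"
  using assms by (simp add: lam_def order_stat_def eigs_DeltaGamma)

lemma lam_less_iff:
  assumes "p > 0" "q > 0" "1 \<le> j" "j \<le> p * q"
  shows "lam p q j \<theta> \<phi> < t \<longleftrightarrow> j \<le> card {i. i < p * q \<and> grid_eigval p q \<theta> \<phi> i < t}"
proof -
  have "j - 1 < c \<longleftrightarrow> j \<le> c" for c
    using assms(3) by arith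
  then show ?thesis
    using assms order_stat_less_iff[of "j - 1" _ t] by (simp add: lam_eq_order_stat filter_mset_image_mset)
qed

lemma lam_le_iff:
  assumes "p > 0" "q > 0" "1 \<le> j" "j \<le> p * q"
  shows "lam p q j \<theta> \<phi> \<le> t \<longleftrightarrow> j \<le> card {i. i < p * q \<and> grid_eigval p q \<theta> \<phi> i \<le> t}"
proof -
  have "j - 1 < c \<longleftrightarrow> j \<le> c" for c
    using assms(3) by arith
  then show ?thesis
    using assms order_stat_le_iff[of "j - 1" _ t] by (simp add: lam_eq_order_stat filter_mset_image_mset)
qed

lemma connected_band:
  assumes p: "p > 0" and q: "q > 0" and j: "1 \<le> j" "j \<le> p * q"
  shows "connected (band p q j)"
proof -
  have "continuous_on ({0..pi} \<times> {0..pi})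
      (\<lambda>x. order_stat (image_mset (\<lambda>i. grid_eigval p q (fst x) (snd x) i) (mset_set {..<p * q})) (j - 1))"
    using j p q by (intro continuous_on_order_stat) (auto simp: grid_eigval_def fourier_angle_def intro!: continuous_intros)
  then have "continuous_on ({0..pi} \<times> {0..pi}) (\<lambda>(\<theta>, \<phi>). lam p q j \<theta> \<phi>)"
    using p q by (simp add: lam_eq_order_stat case_prod_beta')
  then show ?thesis
    unfolding band_def
    by (intro connected_continuous_image convex_connected convex_Times) auto
qed

section \<open>Parity of the sign-changing indices\<close>

lemma even_card_fixpoint_free_involution:
  assumes "finite X" "\<And>x. x \<in> X \<Longrightarrow> h x \<in> X" "\<And>x. x \<in> X \<Longrightarrow> h (h x) = x"
    "\<And>x. x \<in> X \<Longrightarrow> h x \<noteq> x"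
  shows "even (card X)"
proof -
  have "(\<Sum>x\<in>X. 1 :: bit) = 0"
    by (rule sum_involution_eq_0[where h = h]) (use assms in auto)
  then have "even (of_nat (card X) :: bit)"
    by simp
  then show ?thesis
    by (simp only: even_of_nat_iff)
qed

lemma odd_card_involution_unique_fixpoint:
  assumes fin: "finite X" and maps: "\<And>x. x \<in> X \<Longrightarrow> h x \<in> X"
    and invol: "\<And>x. x \<in> X \<Longrightarrow> h (h x) = x"
    and a: "a \<in> X" and fixed: "\<And>x. x \<in> X \<Longrightarrow> h x = x \<longleftrightarrow> x = a"
  shows "odd (card X)"
proof -
  have "even (card (X - {a}))"
  proof (rule even_card_fixpoint_free_involution)
    fix x assume x: "x \<in> X - {a}"
    have "h x \<noteq> a"
    proof
      assume "h x = a"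
      then have "x = h a"
        using invol x by force
      also have "h a = a"
        using fixed a by blast
      finally show False
        using x by simp
    qed
    then show "h x \<in> X - {a}"
      using x maps by auto
  qed (use fin invol fixed in auto)
  then show ?thesis
    using card_Suc_Diff1[OF fin a] by (metis even_Suc)
qed

text \<open>
  At \<open>(\<pi> - p t, q t)\<close> the two angles in \<open>grid_eigval\<close> have half-sum \<open>sum_angle\<close> and
  half-difference \<open>diff_angle - t\<close>.
\<close>

definition sum_angle :: "nat \<Rightarrow> nat \<Rightarrow> nat \<Rightarrow> real" where
  "sum_angle p q i = ((2 * real (i div q) + 1) * pi / real p + 2 * pi * real (i mod q) / real q) / 2"

definition diff_angle :: "nat \<Rightarrow> nat \<Rightarrow> nat \<Rightarrow> real" where
  "diff_angle p q i = ((2 * real (i div q) + 1) * pi / real p - 2 * pi * real (i mod q) / real q) / 2"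

text \<open>The involution \<open>(k, l) \<mapsto> (p - 1 - k, -l mod q)\<close> of the index grid.\<close>

definition grid_reflect :: "nat \<Rightarrow> nat \<Rightarrow> nat \<Rightarrow> nat" where
  "grid_reflect p q i = (p - 1 - i div q) * q + (q - i mod q) mod q"

lemma grid_reflect_div_mod:
  assumes "q > 0"
  shows "grid_reflect p q i div q = p - 1 - i div q" "grid_reflect p q i mod q = (q - i mod q) mod q"
  using assms by (simp_all add: grid_reflect_def)

lemma grid_reflect_less:
  assumes "i < p * q"
  shows "grid_reflect p q i < p * q"
proof -
  have "q > 0" "p > 0"
    using assms by (auto intro: gr0I)
  then show ?thesis
    unfolding grid_reflect_def by (intro mult_add_less_mult_nat) auto
qed

lemma grid_reflect_involutive:
  assumes i: "i < p * q"
  shows "grid_reflect p q (grid_reflect p q i) = i"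
proof -
  have q: "q > 0" and "i div q < p"
    using i by (auto intro: gr0I simp: less_mult_imp_div_less)
  moreover have "(q - (q - i mod q) mod q) mod q = i mod q"
    using q by (cases "i mod q = 0") auto
  ultimately have "grid_reflect p q (grid_reflect p q i) = i div q * q + i mod q"
    by (simp add: grid_reflect_def[of p q "grid_reflect p q i"] grid_reflect_div_mod)
  then show ?thesis
    by simp
qed

lemma cos_sum_angle_grid_reflect:
  assumes i: "i < p * q"
  shows "\<bar>cos (sum_angle p q (grid_reflect p q i))\<bar> = \<bar>cos (sum_angle p q i)\<bar>"
proof -
  have q: "q > 0" and p: "p > 0" and k: "i div q < p"
    using i by (auto intro: gr0I simp: less_mult_imp_div_less)
  have k': "real (p - 1 - i div q) = real p - 1 - real (i div q)"
    using k by (simp add: of_nat_diff)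
  show ?thesis
  proof (cases "i mod q = 0")
    case True
    then have "sum_angle p q (grid_reflect p q i) = pi - sum_angle p q i"
      unfolding sum_angle_def grid_reflect_div_mod[OF q] k' using p by (simp add: field_simps)
    then show ?thesis
      by simp
  next
    case False
    then have l': "real ((q - i mod q) mod q) = real q - real (i mod q)"
      using q by (simp add: of_nat_diff)
    have "sum_angle p q (grid_reflect p q i) = 2 * pi - sum_angle p q i"
      unfolding sum_angle_def grid_reflect_div_mod[OF q] k' l' using p q by (simp add: field_simps)
    then show ?thesis
      by simp
  qed
qed

lemma odd_card_sum_angle_zeros:
  assumes p: "odd p" and q: "q > 0"
  shows "odd (card {i. i < p * q \<and> cos (sum_angle p q i) = 0})"
proof -
  obtain m where p_eq: "p = 2 * m + 1"
    using p by (metis oddE)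
  let ?Z = "{i. i < p * q \<and> cos (sum_angle p q i) = 0}"
  show ?thesis
  proof (rule odd_card_involution_unique_fixpoint[where h = "grid_reflect p q" and a = "m * q"])
    show "finite ?Z" by simp
    show "grid_reflect p q i \<in> ?Z" "grid_reflect p q (grid_reflect p q i) = i" if "i \<in> ?Z" for i
      using that grid_reflect_less grid_reflect_involutive cos_sum_angle_grid_reflect[of i p q] by auto
    have centre: "sum_angle p q (m * q) = pi / 2"
      using q unfolding sum_angle_def p_eq by (simp add: field_simps)
    have "cos (sum_angle p q (m * q)) = 0"
      unfolding centre by simp
    moreover have "m * q < p * q"
      using q unfolding p_eq by simp
    ultimately show "m * q \<in> ?Z"
      by simp
    show "grid_reflect p q i = i \<longleftrightarrow> i = m * q" if i: "i \<in> ?Z" for i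
    proof
      assume fixed: "grid_reflect p q i = i"
      have "i div q < p"
        using i by (simp add: less_mult_imp_div_less)
      moreover have "i div q = p - 1 - i div q"
        using grid_reflect_div_mod(1)[OF q, of p i] fixed by simp
      ultimately have k: "i div q = m"
        using p_eq by linarith
      have "i mod q = 0"
      proof (rule ccontr)
        assume l: "i mod q \<noteq> 0"
        then have "q - i mod q = i mod q"
          using fixed grid_reflect_div_mod(2)[OF q, of p i] q by simp
        then have "real q = 2 * real (i mod q)"
          using l by linarith
        then have "sum_angle p q i = pi"
          using k l unfolding sum_angle_def p_eq by (simp add: field_simps)
        then show False
          using i by simp
      qed
      then show "i = m * q"
        using k div_mult_mod_eq[of i q] by simp
    next
      assume "i = m * q"
      then show "grid_reflect p q i = i"
        using q by (simp add: grid_reflect_def p_eq)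
    qed
  qed
qed

section \<open>A change in the number of negative eigenvalues\<close>

lemma grid_eigval_shifted:
  assumes p: "p > 0" and q: "q > 0"
  shows "grid_eigval p q (pi - real p * t + s) (real q * t) i =
    4 * cos (sum_angle p q i + s / (2 * real p)) * cos (diff_angle p q i - t + s / (2 * real p))"
proof -
  define w where "w = fourier_angle p (pi - real p * t + s) (i div q)"
  define z where "z = fourier_angle q (real q * t) (i mod q)"
  have "grid_eigval p q (pi - real p * t + s) (real q * t) i = 2 * (cos w + cos z)"
    unfolding grid_eigval_def w_def z_def by simp
  also have "\<dots> = 4 * cos ((w + z) / 2) * cos ((w - z) / 2)"
    by (simp add: cos_plus_cos)
  also have "(w + z) / 2 = sum_angle p q i + s / (2 * real p)"
    unfolding w_def z_def fourier_angle_def sum_angle_def using p q by (simp add: field_simps)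
  also have "(w - z) / 2 = diff_angle p q i - t + s / (2 * real p)"
    unfolding w_def z_def fourier_angle_def diff_angle_def using p q by (simp add: field_simps)
  finally show ?thesis .
qed

lemma cos_add_mult_cos_diff:
  fixes a u :: real
  shows "cos (a + u) * cos (a - u) = cos a ^ 2 - sin u ^ 2"
proof -
  have "cos (a + u) * cos (a - u) = (cos a * cos u) ^ 2 - (sin a * sin u) ^ 2"
    unfolding cos_add cos_diff by (simp add: power2_eq_square algebra_simps)
  also have "\<dots> = cos a ^ 2 * (1 - sin u ^ 2) - (1 - cos a ^ 2) * sin u ^ 2"
    unfolding power_mult_distrib sin_squared_eq[of a] cos_squared_eq[of u] ..
  finally show ?thesis
    by (simp add: algebra_simps)
qed

lemma grid_eigval_shifted_product:
  assumes p: "p > 0" and q: "q > 0"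
  shows "grid_eigval p q (pi - real p * t + 2 * real p * u) (real q * t) i *
      grid_eigval p q (pi - real p * t - 2 * real p * u) (real q * t) i =
    16 * (cos (sum_angle p q i) ^ 2 - sin u ^ 2) * (cos (diff_angle p q i - t) ^ 2 - sin u ^ 2)"
proof -
  have "grid_eigval p q (pi - real p * t + 2 * real p * u) (real q * t) i =
      4 * cos (sum_angle p q i + u) * cos (diff_angle p q i - t + u)"
    using grid_eigval_shifted[OF p q, of t "2 * real p * u" i] p by simp
  moreover have "grid_eigval p q (pi - real p * t - 2 * real p * u) (real q * t) i =
      4 * cos (sum_angle p q i - u) * cos (diff_angle p q i - t - u)"
    using grid_eigval_shifted[OF p q, of t "- (2 * real p * u)" i] p by simp
  ultimately have "grid_eigval p q (pi - real p * t + 2 * real p * u) (real q * t) i *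
      grid_eigval p q (pi - real p * t - 2 * real p * u) (real q * t) i =
      16 * (cos (sum_angle p q i + u) * cos (sum_angle p q i - u))
        * (cos (diff_angle p q i - t + u) * cos (diff_angle p q i - t - u))"
    by (simp add: algebra_simps)
  then show ?thesis
    by (simp only: cos_add_mult_cos_diff)
qed

lemma card_neg_ne_if_odd_card_neg_mult:
  fixes a b :: "'a \<Rightarrow> real"
  assumes fin: "finite I" and nz: "\<And>i. i \<in> I \<Longrightarrow> a i * b i \<noteq> 0"
    and odd: "odd (card {i \<in> I. a i * b i < 0})"
  shows "card {i \<in> I. a i < 0} \<noteq> card {i \<in> I. b i < 0}"
proof
  let ?A = "{i \<in> I. a i < 0}" and ?B = "{i \<in> I. b i < 0}"
  assume eq: "card ?A = card ?B"
  have "?A \<union> ?B = {i \<in> I. a i * b i < 0} \<union> (?A \<inter> ?B)"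
    using nz by (auto simp: mult_less_0_iff) (metis linorder_neqE_linordered_idom mult_eq_0_iff)+
  moreover have "card ({i \<in> I. a i * b i < 0} \<union> (?A \<inter> ?B)) =
      card {i \<in> I. a i * b i < 0} + card (?A \<inter> ?B)"
    using fin by (intro card_Un_disjoint) (auto simp: mult_less_0_iff)
  moreover have "card ?A + card ?B = card (?A \<union> ?B) + card (?A \<inter> ?B)"
    using fin by (intro card_Un_Int) auto
  ultimately have "card ?A + card ?B = card {i \<in> I. a i * b i < 0} + 2 * card (?A \<inter> ?B)"
    by simp
  then show False
    using eq odd by presburger
qed

lemma exists_cos_nonzero_shift:
  fixes f :: "nat \<Rightarrow> real"
  assumes "c > 0"
  obtains t where "0 < t" "t < c" "\<And>i. i < n \<Longrightarrow> cos (f i - t) \<noteq> 0"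
proof -
  have "countable {t. cos (f i - t) = 0}" for i
  proof (rule countable_subset)
    show "{t. cos (f i - t) = 0} \<subseteq> range (\<lambda>k::int. f i - of_int k * (pi / 2))"
    proof
      fix t assume "t \<in> {t. cos (f i - t) = 0}"
      then obtain k :: int where "f i - t = of_int k * (pi / 2)"
        using cos_zero_iff_int by auto
      then show "t \<in> range (\<lambda>k::int. f i - of_int k * (pi / 2))"
        by (intro range_eqI[of _ _ k]) linarith
    qed
  qed simp
  then have "countable (\<Union>i<n. {t. cos (f i - t) = 0})"
    by (intro countable_UN) auto
  moreover have "uncountable {0<..<c}"
    using assms by (simp add: uncountable_open_interval)
  ultimately obtain t where "t \<in> {0<..<c}" "t \<notin> (\<Union>i<n. {t. cos (f i - t) = 0})"
    by (metis countable_subset subsetI)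
  then show ?thesis
    using that by auto
qed

lemma eventually_sin_squared_less:
  fixes c :: real
  assumes "c > 0"
  shows "\<forall>\<^sub>F u in at_right (0::real). sin u ^ 2 < c"
proof -
  have "((\<lambda>u. sin u ^ 2) \<longlongrightarrow> sin 0 ^ 2) (at_right (0::real))"
    by (intro tendsto_intros)
  then have "((\<lambda>u. sin u ^ 2) \<longlongrightarrow> 0) (at_right (0::real))"
    by simp
  from order_tendstoD(2)[OF this assms] show ?thesis .
qed

lemma exists_eigval_count_change:
  assumes p: "odd p" and q: "q > 0"
  obtains \<theta>\<^sub>1 \<theta>\<^sub>2 \<phi> where "\<theta>\<^sub>1 \<in> {0..pi}" "\<theta>\<^sub>2 \<in> {0..pi}" "\<phi> \<in> {0..pi}"
    "\<And>i. i < p * q \<Longrightarrow> grid_eigval p q \<theta>\<^sub>1 \<phi> i \<noteq> 0"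
    "\<And>i. i < p * q \<Longrightarrow> grid_eigval p q \<theta>\<^sub>2 \<phi> i \<noteq> 0"
    "card {i. i < p * q \<and> grid_eigval p q \<theta>\<^sub>1 \<phi> i < 0} \<noteq> card {i. i < p * q \<and> grid_eigval p q \<theta>\<^sub>2 \<phi> i < 0}"
proof -
  have p0: "p > 0"
    using p by (rule odd_pos)
  obtain t where t: "0 < t" "t < min (pi / real p) (pi / real q)"
    and generic: "\<And>i. i < p * q \<Longrightarrow> cos (diff_angle p q i - t) \<noteq> 0"
    using exists_cos_nonzero_shift[of "min (pi / real p) (pi / real q)"] p0 q by auto
  have pt: "real p * t < pi" and qt: "real q * t < pi"
    using t p0 q by (simp_all add: field_simps)
  define b where "b = min 1 (min (t / 2) ((pi - real p * t) / (2 * real p)))"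
  have "b > 0"
    using t pt p0 by (simp add: b_def)
  have "\<forall>\<^sub>F u in at_right 0. sin u ^ 2 < cos (diff_angle p q i - t) ^ 2 \<and>
      (cos (sum_angle p q i) \<noteq> 0 \<longrightarrow> sin u ^ 2 < cos (sum_angle p q i) ^ 2)" if "i < p * q" for i
    using generic[OF that]
    by (cases "cos (sum_angle p q i) = 0") (auto intro!: eventually_conj eventually_sin_squared_less)
  then have ev: "\<forall>\<^sub>F u in at_right 0. u \<in> {0<..<b} \<and> (\<forall>i\<in>{..<p * q}.
      sin u ^ 2 < cos (diff_angle p q i - t) ^ 2 \<and>
      (cos (sum_angle p q i) \<noteq> 0 \<longrightarrow> sin u ^ 2 < cos (sum_angle p q i) ^ 2))"
    using \<open>b > 0\<close> by (intro eventually_conj eventually_at_right_real eventually_ball_finite) auto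
  obtain u where u: "0 < u" "u < b"
    and small: "\<And>i. i < p * q \<Longrightarrow> sin u ^ 2 < cos (diff_angle p q i - t) ^ 2 \<and>
      (cos (sum_angle p q i) \<noteq> 0 \<longrightarrow> sin u ^ 2 < cos (sum_angle p q i) ^ 2)"
    using eventually_happens'[OF _ ev] by auto
  have "sin u > 0"
    using u pi_gt3 by (intro sin_gt_zero) (auto simp: b_def)
  have pu: "2 * real p * u < real p * t" "2 * real p * u < pi - real p * t"
    using u p0 by (auto simp: b_def field_simps)
  let ?\<theta>\<^sub>1 = "pi - real p * t + 2 * real p * u" and ?\<theta>\<^sub>2 = "pi - real p * t - 2 * real p * u"
    and ?\<phi> = "real q * t"
  let ?F\<^sub>1 = "grid_eigval p q ?\<theta>\<^sub>1 ?\<phi>" and ?F\<^sub>2 = "grid_eigval p q ?\<theta>\<^sub>2 ?\<phi>"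
  have sign: "?F\<^sub>1 i * ?F\<^sub>2 i \<noteq> 0 \<and> (?F\<^sub>1 i * ?F\<^sub>2 i < 0 \<longleftrightarrow> cos (sum_angle p q i) = 0)"
    if i: "i < p * q" for i
  proof -
    have d: "cos (diff_angle p q i - t) ^ 2 - sin u ^ 2 > 0"
      using small[OF i] by simp
    show ?thesis
    proof (cases "cos (sum_angle p q i) = 0")
      case True
      then show ?thesis
        using d \<open>sin u > 0\<close> by (simp add: grid_eigval_shifted_product[OF p0 q] mult_pos_neg mult_neg_pos)
    next
      case False
      then have "cos (sum_angle p q i) ^ 2 - sin u ^ 2 > 0"
        using small[OF i] by simp
      then have "16 * (cos (sum_angle p q i) ^ 2 - sin u ^ 2) * (cos (diff_angle p q i - t) ^ 2 - sin u ^ 2) > 0"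
        using d by simp
      then show ?thesis
        unfolding grid_eigval_shifted_product[OF p0 q] using False by auto
    qed
  qed
  have "odd (card {i \<in> {..<p * q}. ?F\<^sub>1 i * ?F\<^sub>2 i < 0})"
    using odd_card_sum_angle_zeros[OF p q] sign by (auto cong: conj_cong)
  then have "card {i \<in> {..<p * q}. ?F\<^sub>1 i < 0} \<noteq> card {i \<in> {..<p * q}. ?F\<^sub>2 i < 0}"
    using sign by (intro card_neg_ne_if_odd_card_neg_mult) auto
  moreover have "?\<theta>\<^sub>1 \<in> {0..pi}" "?\<theta>\<^sub>2 \<in> {0..pi}" "?\<phi> \<in> {0..pi}"
  proof -
    have "0 \<le> real p * t" "0 \<le> real p * u"
      using t u by simp_all
    then show "?\<theta>\<^sub>1 \<in> {0..pi}" "?\<theta>\<^sub>2 \<in> {0..pi}" "?\<phi> \<in> {0..pi}"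
      using pu pt qt t by auto
  qed
  ultimately show ?thesis
    using sign by (intro that[of ?\<theta>\<^sub>1 ?\<theta>\<^sub>2 ?\<phi>]) auto
qed

lemma zero_in_interior_band:
  assumes p: "p > 0" and q: "q > 0"
    and in_square: "\<theta>\<^sub>1 \<in> {0..pi}" "\<phi>\<^sub>1 \<in> {0..pi}" "\<theta>\<^sub>2 \<in> {0..pi}" "\<phi>\<^sub>2 \<in> {0..pi}"
    and nonzero: "\<And>i. i < p * q \<Longrightarrow> grid_eigval p q \<theta>\<^sub>1 \<phi>\<^sub>1 i \<noteq> 0"
    and less: "card {i. i < p * q \<and> grid_eigval p q \<theta>\<^sub>1 \<phi>\<^sub>1 i < 0} < card {i. i < p * q \<and> grid_eigval p q \<theta>\<^sub>2 \<phi>\<^sub>2 i < 0}"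
  defines "j \<equiv> card {i. i < p * q \<and> grid_eigval p q \<theta>\<^sub>2 \<phi>\<^sub>2 i < 0}"
  shows "1 \<le> j" "j \<le> p * q" "0 \<in> interior (band p q j)"
proof -
  show j1: "1 \<le> j" and jn: "j \<le> p * q"
    using less card_mono[of "{..<p * q}" "{i. i < p * q \<and> grid_eigval p q \<theta>\<^sub>2 \<phi>\<^sub>2 i < 0}"]
    by (auto simp: j_def)
  have "lam p q j \<theta>\<^sub>2 \<phi>\<^sub>2 < 0"
    using lam_less_iff[OF p q j1 jn] by (simp add: j_def)
  moreover have "{i. i < p * q \<and> grid_eigval p q \<theta>\<^sub>1 \<phi>\<^sub>1 i \<le> 0} = {i. i < p * q \<and> grid_eigval p q \<theta>\<^sub>1 \<phi>\<^sub>1 i < 0}"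
    using nonzero by force
  then have "\<not> lam p q j \<theta>\<^sub>1 \<phi>\<^sub>1 \<le> 0"
    using lam_le_iff[OF p q j1 jn, of \<theta>\<^sub>1 \<phi>\<^sub>1 0] less by (simp add: j_def)
  ultimately have "0 \<in> interior {lam p q j \<theta>\<^sub>2 \<phi>\<^sub>2 .. lam p q j \<theta>\<^sub>1 \<phi>\<^sub>1}"
    by simp
  moreover have "lam p q j \<theta>\<^sub>1 \<phi>\<^sub>1 \<in> band p q j" "lam p q j \<theta>\<^sub>2 \<phi>\<^sub>2 \<in> band p q j"
    using in_square unfolding band_def by (auto intro: image_eqI)
  then have "{lam p q j \<theta>\<^sub>2 \<phi>\<^sub>2 .. lam p q j \<theta>\<^sub>1 \<phi>\<^sub>1} \<subseteq> band p q j"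
    by (intro connected_contains_Icc connected_band p q j1 jn)
  ultimately show "0 \<in> interior (band p q j)"
    using interior_mono by blast
qed

theorem proposition3p4:
  fixes p q :: nat
  assumes "odd p" and "4 dvd q" and "q > 0"
  shows "\<exists>j. 1 \<le> j \<and> j \<le> p * q \<and> (0::real) \<in> interior (band p q j)"
proof -
  have p: "p > 0"
    using \<open>odd p\<close> by (rule odd_pos)
  obtain \<theta>\<^sub>1 \<theta>\<^sub>2 \<phi> where square: "\<theta>\<^sub>1 \<in> {0..pi}" "\<theta>\<^sub>2 \<in> {0..pi}" "\<phi> \<in> {0..pi}"
    and nonzero: "\<And>i. i < p * q \<Longrightarrow> grid_eigval p q \<theta>\<^sub>1 \<phi> i \<noteq> 0"
      "\<And>i. i < p * q \<Longrightarrow> grid_eigval p q \<theta>\<^sub>2 \<phi> i \<noteq> 0"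
    and change: "card {i. i < p * q \<and> grid_eigval p q \<theta>\<^sub>1 \<phi> i < 0} \<noteq>
      card {i. i < p * q \<and> grid_eigval p q \<theta>\<^sub>2 \<phi> i < 0}"
    using exists_eigval_count_change[OF \<open>odd p\<close> \<open>q > 0\<close>] by blast
  then consider
      "card {i. i < p * q \<and> grid_eigval p q \<theta>\<^sub>1 \<phi> i < 0} < card {i. i < p * q \<and> grid_eigval p q \<theta>\<^sub>2 \<phi> i < 0}"
    | "card {i. i < p * q \<and> grid_eigval p q \<theta>\<^sub>2 \<phi> i < 0} < card {i. i < p * q \<and> grid_eigval p q \<theta>\<^sub>1 \<phi> i < 0}"
    by linarith
  then show ?thesis
  proof cases
    case 1
    from zero_in_interior_band[OF p \<open>q > 0\<close> square(1,3,2,3) nonzero(1) this] show ?thesis by blast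
  next
    case 2
    from zero_in_interior_band[OF p \<open>q > 0\<close> square(2,3,1,3) nonzero(2) this] show ?thesis by blast
  qed
qed

end
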